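(* Let $\sum_{n=1}^{\infty}x_n$ be a conditionally convergent series of real numbers. Then for any $a,b\in\mathbb{R}$ with $a<b$ there exists a strictly increasing sequence of indices $(k_n)_{n=1}^{\infty}$ such that the subseries $\sum_{n=1}^{\infty}x_{k_n}$ is absolutely convergent and its achievement set $A(x_{k_n})$ contains the interval $[a,b]$.
   Context: For a real sequence $(y_n)$, its achievement set is $A(y_n)=\{\sum_{n\in A}y_n : A\subseteq\mathbb{N}\}$ (only sets $A$ for which the sum converges are taken; for an absolutely convergent series this is every $A$). *)

theory Defs
  imports "HOL-Analysis.Analysis"
begin

definition achievement_set :: "(nat \<Rightarrow> real) \<Rightarrow> real set" where
  "achievement_set y = {s. \<exists>A :: nat set. (\<lambda>n. if n \<in> A then y n else 0) sums s}"

definition conditionally_convergent :: "(nat \<Rightarrow> real) \<Rightarrow> bool" where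
  "conditionally_convergent x \<longleftrightarrow> summable x \<and> \<not> summable (\<lambda>n. \<bar>x n\<bar>)"

end

theory Submission
  imports Defs
begin

text \<open>If a nonnegative summable series has every term at most the sum of the later ones
  (Kakeya's condition), the greedy algorithm realises every number between 0 and the sum as a
  subsum; splitting off the negative part, a real series with absolutely summable terms satisfying
  the condition achieves the whole interval between the sum of its negative terms and the sum of
  its positive terms.

  So it suffices to extract from a conditionally convergent series a subsequence satisfying the
  condition whose positive terms sum to a prescribed P > 0 and negative terms to a prescribed -Q.
  Keep a positive budget (initially P) and a negative one (initially Q), and repeatedly take the
  next term using at most half of the budget of its sign; such terms exist arbitrarily far out
  because the positive and negative parts both diverge while the terms tend to 0. Taking at most
  half of a budget leaves at least the term itself for the later terms, which gives Kakeya's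
  condition. Both budgets are exhausted: a budget with a positive limit L would eventually catch
  every term of its sign of size below L/2, making that part of the series summable.\<close>

fun greedy_subsum :: "(nat \<Rightarrow> real) \<Rightarrow> real \<Rightarrow> nat \<Rightarrow> real" where
  "greedy_subsum z t 0 = 0"
| "greedy_subsum z t (Suc n) =
     (if greedy_subsum z t n + z n \<le> t then greedy_subsum z t n + z n else greedy_subsum z t n)"

lemma subsum_sums_if_terms_le_tails:
  fixes z :: "nat \<Rightarrow> real"
  assumes "summable z" and le_tail: "\<And>n. z n \<le> (\<Sum>m. z (m + Suc n))"
    and "0 \<le> t" and "t \<le> suminf z"
  shows "\<exists>B. (\<lambda>n. if n \<in> B then z n else 0) sums t"
proof -
  define B where "B = {n. greedy_subsum z t n + z n \<le> t}"
  define R where "R n = suminf z - (\<Sum>i<n. z i)" for n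
  have partial_sums: "(\<Sum>i<n. if i \<in> B then z i else 0) = greedy_subsum z t n" for n
    by (induction n) (auto simp: B_def)
  have below: "greedy_subsum z t n \<le> t" for n
    using \<open>0 \<le> t\<close> by (induction n) auto
  have le_R: "z n \<le> R (Suc n)" for n
    using le_tail[of n] suminf_minus_initial_segment[OF \<open>summable z\<close>, of "Suc n"]
    by (simp only: R_def)
  \<comment> \<open>Skipped terms exceed the gap, and a term is at most the rest of the series.\<close>
  have gap: "t - greedy_subsum z t n \<le> R n" for n
  proof (induction n)
    case 0
    then show ?case using \<open>t \<le> suminf z\<close> by (simp add: R_def)
  next
    case (Suc n)
    have "R (Suc n) = R n - z n" by (simp add: R_def)
    then show ?case using Suc le_R[of n] by auto
  qed
  have "R \<longlonglongrightarrow> suminf z - suminf z"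
    unfolding R_def by (intro tendsto_intros summable_LIMSEQ \<open>summable z\<close>)
  then have lower: "(\<lambda>n. t - R n) \<longlonglongrightarrow> t"
    using tendsto_diff[OF tendsto_const, of R 0 sequentially t] by simp
  have "greedy_subsum z t \<longlonglongrightarrow> t"
    using below gap
    by (intro tendsto_sandwich[OF _ _ lower tendsto_const])
      (auto intro: always_eventually simp: algebra_simps)
  then have "(\<lambda>n. if n \<in> B then z n else 0) sums t"
    unfolding sums_def partial_sums .
  then show ?thesis by blast
qed

definition terms_le_tails :: "(nat \<Rightarrow> real) \<Rightarrow> bool" where
  "terms_le_tails y \<longleftrightarrow> (\<forall>n. \<bar>y n\<bar> \<le> (\<Sum>m. \<bar>y (m + Suc n)\<bar>))"

lemma sums_abs_of_parts:
  fixes y :: "nat \<Rightarrow> real"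
  assumes "(\<lambda>n. max (y n) 0) sums P" and "(\<lambda>n. min (y n) 0) sums (- Q)"
  shows "(\<lambda>n. \<bar>y n\<bar>) sums (P + Q)"
proof -
  have "(\<lambda>n. max (y n) 0 - min (y n) 0) sums (P - - Q)"
    using assms by (rule sums_diff)
  moreover have "(\<lambda>n. max (y n) 0 - min (y n) 0) = (\<lambda>n. \<bar>y n\<bar>)"
    by (auto simp: fun_eq_iff)
  ultimately show ?thesis by simp
qed

lemma interval_subset_achievement_set:
  fixes y :: "nat \<Rightarrow> real"
  assumes "terms_le_tails y"
    and pos_part: "(\<lambda>n. max (y n) 0) sums P" and neg_part: "(\<lambda>n. min (y n) 0) sums (- Q)"
  shows "{- Q..P} \<subseteq> achievement_set y"
proof
  fix t assume t: "t \<in> {- Q..P}"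
  have "(\<lambda>n. \<bar>y n\<bar>) sums (P + Q)"
    using pos_part neg_part by (rule sums_abs_of_parts)
  then obtain B where B: "(\<lambda>n. if n \<in> B then \<bar>y n\<bar> else 0) sums (t + Q)"
    using subsum_sums_if_terms_le_tails[of "\<lambda>n. \<bar>y n\<bar>" "t + Q"] t \<open>terms_le_tails y\<close>
    by (auto simp: sums_iff terms_le_tails_def)
  \<comment> \<open>Adding the negative part to the subsum over B flips the negative terms in and out.\<close>
  define A where "A = {n. (0 \<le> y n \<and> n \<in> B) \<or> (y n < 0 \<and> n \<notin> B)}"
  have "(\<lambda>n. (if n \<in> B then \<bar>y n\<bar> else 0) + min (y n) 0) sums (t + Q + - Q)"
    using B neg_part by (rule sums_add)
  moreover have "(\<lambda>n. (if n \<in> B then \<bar>y n\<bar> else 0) + min (y n) 0)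
      = (\<lambda>n. if n \<in> A then y n else 0)"
    by (auto simp: fun_eq_iff A_def)
  ultimately have "(\<lambda>n. if n \<in> A then y n else 0) sums t" by simp
  then show "t \<in> achievement_set y"
    unfolding achievement_set_def by blast
qed

lemma conditionally_convergent_uminus:
  "conditionally_convergent x \<Longrightarrow> conditionally_convergent (\<lambda>n. - x n)"
  by (simp add: conditionally_convergent_def summable_minus_iff)

lemma conditionally_convergent_tendsto_zero:
  "conditionally_convergent x \<Longrightarrow> x \<longlonglongrightarrow> 0"
  by (simp add: conditionally_convergent_def summable_LIMSEQ_zero)

lemma conditionally_convergent_not_summable_pos_part:
  assumes "conditionally_convergent x"
  shows "\<not> summable (\<lambda>n. max (x n) 0)"
proof
  assume "summable (\<lambda>n. max (x n) 0)"
  then have "summable (\<lambda>n. 2 * max (x n) 0 - x n)"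
    using assms by (intro summable_diff summable_mult) (simp_all add: conditionally_convergent_def)
  moreover have "(\<lambda>n. 2 * max (x n) 0 - x n) = (\<lambda>n. \<bar>x n\<bar>)"
    by (auto simp: fun_eq_iff)
  ultimately show False
    using assms by (simp add: conditionally_convergent_def)
qed

lemma conditionally_convergent_small_pos_term:
  assumes cc: "conditionally_convergent x" and "0 < e"
  shows "\<exists>i\<ge>j. 0 < x i \<and> x i \<le> e"
proof (rule ccontr)
  assume none: "\<not> ?thesis"
  have "eventually (\<lambda>i. x i < e) sequentially"
    using conditionally_convergent_tendsto_zero[OF cc] \<open>0 < e\<close> by (rule order_tendstoD)
  then have "eventually (\<lambda>i. max (x i) 0 = 0) sequentially"
    using eventually_ge_at_top[of j] by eventually_elim (use none in force)
  then have "summable (\<lambda>i. max (x i) 0)"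
    using summable_cong summable_zero by fastforce
  with conditionally_convergent_not_summable_pos_part[OF cc] show False by contradiction
qed

lemma budget_tendsto_zero:
  fixes x p :: "nat \<Rightarrow> real" and k :: "nat \<Rightarrow> nat"
  assumes "x \<longlonglongrightarrow> 0" and not_summable: "\<not> summable (\<lambda>i. max (x i) 0)"
    and "strict_mono k" and pos: "\<And>n. 0 < p n"
    and step: "\<And>n. p (Suc n) = p n - max (x (k n)) 0"
    and caught: "\<And>i. 0 < x i \<Longrightarrow> (\<And>n. x i \<le> p n / 2) \<Longrightarrow> i \<in> range k"
  shows "p \<longlonglongrightarrow> 0"
proof -
  have "decseq p"
    using step by (intro decseq_SucI) simp
  then obtain L where lim: "p \<longlonglongrightarrow> L" and L_le: "\<And>n. L \<le> p n"
    using pos decseq_convergent[of p 0] by (metis less_imp_le)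
  have "0 \<le> L"
    using LIMSEQ_le_const[OF lim] pos less_imp_le by blast
  moreover have "\<not> 0 < L"
  proof
    assume "0 < L"
    then have "eventually (\<lambda>i. x i < L / 2) sequentially"
      using order_tendstoD(2)[OF \<open>x \<longlonglongrightarrow> 0\<close>, of "L / 2"] by simp
    then obtain M where M: "\<And>i. M \<le> i \<Longrightarrow> x i < L / 2"
      by (auto simp: eventually_sequentially)
    define g where "g i = (if M \<le> i then max (x i) 0 else 0)" for i
    have "(\<Sum>i<n. max (x (k i)) 0) = p 0 - p n" for n
      using step by (induction n) auto
    then have "summable (\<lambda>n. max (x (k n)) 0)"
      using pos
      by (intro bounded_imp_summable[of _ "p 0"])
        (auto simp: lessThan_Suc_atMost[symmetric] less_imp_le)
    then have "summable (\<lambda>n. g (k n))"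
      by (rule summable_comparison_test') (simp add: g_def)
    moreover have "g i = 0" if "i \<notin> range k" for i
    proof (rule ccontr)
      assume "g i \<noteq> 0"
      then have "M \<le> i" "0 < x i"
        by (auto simp: g_def split: if_splits)
      moreover have "x i \<le> p n / 2" for n
        using M[OF \<open>M \<le> i\<close>] L_le[of n] by linarith
      ultimately have "i \<in> range k"
        by (intro caught)
      with that show False by contradiction
    qed
    ultimately have "summable g"
      using summable_mono_reindex[OF \<open>strict_mono k\<close>] by blast
    moreover have "eventually (\<lambda>i. g i = max (x i) 0) sequentially"
      using eventually_ge_at_top[of M] by eventually_elim (simp add: g_def)
    ultimately show False
      using not_summable summable_cong by metis
  qed
  ultimately show ?thesis
    using lim by simp
qed

context
  fixes x :: "nat \<Rightarrow> real" and P Q :: real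
  assumes cc: "conditionally_convergent x" and "0 < P" and "0 < Q"
begin

definition fits :: "real \<Rightarrow> real \<Rightarrow> nat \<Rightarrow> bool" where
  "fits p q i \<longleftrightarrow> (0 < x i \<and> x i \<le> p / 2) \<or> (x i < 0 \<and> - x i \<le> q / 2)"

definition next_fit :: "real \<Rightarrow> real \<Rightarrow> nat \<Rightarrow> nat" where
  "next_fit p q j = (LEAST i. j \<le> i \<and> fits p q i)"

lemma next_fit: "0 < p \<Longrightarrow> j \<le> next_fit p q j \<and> fits p q (next_fit p q j)"
  unfolding next_fit_def
  by (rule LeastI_ex)
    (use conditionally_convergent_small_pos_term[OF cc, of "p / 2" j] in \<open>auto simp: fits_def\<close>)

lemma next_fit_le: "j \<le> i \<Longrightarrow> fits p q i \<Longrightarrow> next_fit p q j \<le> i"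
  unfolding next_fit_def by (rule Least_le) simp

fun greedy_state :: "nat \<Rightarrow> nat \<times> real \<times> real" where
  "greedy_state 0 = (0, P, Q)"
| "greedy_state (Suc n) = (case greedy_state n of (j, p, q) \<Rightarrow>
      (Suc (next_fit p q j), p - max (x (next_fit p q j)) 0, q + min (x (next_fit p q j)) 0))"

definition "greedy_start n = fst (greedy_state n)"
definition "pos_budget n = fst (snd (greedy_state n))"
definition "neg_budget n = snd (snd (greedy_state n))"
definition "greedy_index n = next_fit (pos_budget n) (neg_budget n) (greedy_start n)"

lemma greedy_state_0: "greedy_start 0 = 0" "pos_budget 0 = P" "neg_budget 0 = Q"
  by (simp_all add: greedy_start_def pos_budget_def neg_budget_def)

lemma greedy_state_Suc:
  "greedy_start (Suc n) = Suc (greedy_index n)"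
  "pos_budget (Suc n) = pos_budget n - max (x (greedy_index n)) 0"
  "neg_budget (Suc n) = neg_budget n + min (x (greedy_index n)) 0"
  by (cases "greedy_state n";
      simp add: greedy_start_def pos_budget_def neg_budget_def greedy_index_def)+

lemma budgets_pos: "0 < pos_budget n \<and> 0 < neg_budget n"
proof (induction n)
  case 0
  then show ?case using \<open>0 < P\<close> \<open>0 < Q\<close> by (simp add: greedy_state_0)
next
  case (Suc n)
  then have "fits (pos_budget n) (neg_budget n) (greedy_index n)"
    using next_fit by (simp add: greedy_index_def)
  then show ?case
    using Suc by (auto simp: greedy_state_Suc fits_def)
qed

lemma greedy_index_fits:
  "greedy_start n \<le> greedy_index n" "fits (pos_budget n) (neg_budget n) (greedy_index n)"
  using next_fit budgets_pos by (auto simp: greedy_index_def)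

lemma strict_mono_greedy_index: "strict_mono greedy_index"
proof (rule strict_mono_Suc_iff[THEN iffD2], intro allI)
  fix n
  show "greedy_index n < greedy_index (Suc n)"
    using greedy_index_fits(1)[of "Suc n"] by (simp add: greedy_state_Suc)
qed

lemma budget_partial_sums:
  "(\<Sum>i<n. max (x (greedy_index i)) 0) = P - pos_budget n"
  "(\<Sum>i<n. min (x (greedy_index i)) 0) = neg_budget n - Q"
  by (induction n) (simp_all add: greedy_state_0 greedy_state_Suc)

lemma fits_always_imp_chosen:
  assumes "\<And>n. fits (pos_budget n) (neg_budget n) i"
  shows "i \<in> range greedy_index"
proof -
  define n where "n = (LEAST n. i \<le> greedy_index n)"
  have "\<exists>n. i \<le> greedy_index n"
    using seq_suble[OF strict_mono_greedy_index] by blast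
  then have le_index: "i \<le> greedy_index n"
    unfolding n_def by (rule LeastI_ex)
  have "greedy_start n \<le> i"
  proof (cases n)
    case 0
    then show ?thesis by (simp add: greedy_state_0)
  next
    case (Suc m)
    then have "\<not> i \<le> greedy_index m"
      using not_less_Least[of m "\<lambda>n. i \<le> greedy_index n"] n_def by simp
    then show ?thesis
      using Suc by (simp add: greedy_state_Suc)
  qed
  then have "greedy_index n \<le> i"
    unfolding greedy_index_def using assms by (rule next_fit_le)
  with le_index show ?thesis
    by (metis le_antisym rangeI)
qed

lemma pos_budget_tendsto_zero: "pos_budget \<longlonglongrightarrow> 0"
proof (rule budget_tendsto_zero[OF _ _ strict_mono_greedy_index])
  show "x \<longlonglongrightarrow> 0"
    using cc by (rule conditionally_convergent_tendsto_zero)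
  show "\<not> summable (\<lambda>i. max (x i) 0)"
    using cc by (rule conditionally_convergent_not_summable_pos_part)
  show "i \<in> range greedy_index" if "0 < x i" and "\<And>n. x i \<le> pos_budget n / 2" for i
    using that by (intro fits_always_imp_chosen) (simp add: fits_def)
qed (use budgets_pos greedy_state_Suc in auto)

lemma neg_budget_tendsto_zero: "neg_budget \<longlonglongrightarrow> 0"
proof (rule budget_tendsto_zero[OF _ _ strict_mono_greedy_index])
  show "(\<lambda>i. - x i) \<longlonglongrightarrow> 0"
    using conditionally_convergent_uminus[OF cc]
    by (rule conditionally_convergent_tendsto_zero)
  show "\<not> summable (\<lambda>i. max (- x i) 0)"
    using conditionally_convergent_uminus[OF cc]
    by (rule conditionally_convergent_not_summable_pos_part)
  show "neg_budget (Suc n) = neg_budget n - max (- x (greedy_index n)) 0" for n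
    by (simp add: greedy_state_Suc)
  show "i \<in> range greedy_index" if "0 < - x i" and "\<And>n. - x i \<le> neg_budget n / 2" for i
    using that by (intro fits_always_imp_chosen) (simp add: fits_def)
qed (use budgets_pos in auto)

lemma greedy_pos_part_sums: "(\<lambda>n. max (x (greedy_index n)) 0) sums P"
proof -
  have "(\<lambda>n. P - pos_budget n) \<longlonglongrightarrow> P - 0"
    by (intro tendsto_intros pos_budget_tendsto_zero)
  then show ?thesis
    unfolding sums_def budget_partial_sums by simp
qed

lemma greedy_neg_part_sums: "(\<lambda>n. min (x (greedy_index n)) 0) sums (- Q)"
proof -
  have "(\<lambda>n. neg_budget n - Q) \<longlonglongrightarrow> 0 - Q"
    by (intro tendsto_intros neg_budget_tendsto_zero)
  then show ?thesis
    unfolding sums_def budget_partial_sums by simp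
qed

lemma greedy_terms_le_tails: "terms_le_tails (\<lambda>n. x (greedy_index n))"
  unfolding terms_le_tails_def
proof
  fix n
  let ?y = "\<lambda>n. x (greedy_index n)" and ?tail = "\<Sum>m. \<bar>x (greedy_index (m + Suc n))\<bar>"
  have "summable (\<lambda>n. \<bar>?y n\<bar>)"
    using sums_abs_of_parts[OF greedy_pos_part_sums greedy_neg_part_sums] by (rule sums_summable)
  then have tail: "(\<lambda>m. \<bar>?y (m + Suc n)\<bar>) sums ?tail"
    by (intro summable_sums summable_ignore_initial_segment)
  have "(\<lambda>m. max (?y (m + Suc n)) 0) sums pos_budget (Suc n)"
    using sums_split_initial_segment[OF greedy_pos_part_sums, of "Suc n"]
    by (simp add: budget_partial_sums)
  then have pos_le: "pos_budget (Suc n) \<le> ?tail"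
    using tail by (rule sums_le[rotated]) simp
  have "(\<lambda>m. - min (?y (m + Suc n)) 0) sums neg_budget (Suc n)"
    using sums_minus[OF sums_split_initial_segment[OF greedy_neg_part_sums, of "Suc n"]]
    by (simp add: budget_partial_sums)
  then have neg_le: "neg_budget (Suc n) \<le> ?tail"
    using tail by (rule sums_le[rotated]) simp
  show "\<bar>?y n\<bar> \<le> ?tail"
    using greedy_index_fits(2)[of n] budgets_pos[of n] greedy_state_Suc(2,3)[of n] pos_le neg_le
    by (auto simp: fits_def)
qed

lemma conditionally_convergent_subseries_with_parts:
  "\<exists>k. strict_mono k \<and> terms_le_tails (\<lambda>n. x (k n))
     \<and> (\<lambda>n. max (x (k n)) 0) sums P \<and> (\<lambda>n. min (x (k n)) 0) sums (- Q)"
  using strict_mono_greedy_index greedy_terms_le_tails greedy_pos_part_sums greedy_neg_part_sums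
  by blast

end

theorem mainTheorem1:
  fixes x :: "nat \<Rightarrow> real" and a b :: real
  assumes "conditionally_convergent x" and "a < b"
  shows "\<exists>k :: nat \<Rightarrow> nat. strict_mono k \<and> summable (\<lambda>n. \<bar>x (k n)\<bar>)
           \<and> {a..b} \<subseteq> achievement_set (\<lambda>n. x (k n))"
proof -
  obtain k where "strict_mono k" and tails: "terms_le_tails (\<lambda>n. x (k n))"
    and pos: "(\<lambda>n. max (x (k n)) 0) sums (\<bar>b\<bar> + 1)"
    and neg: "(\<lambda>n. min (x (k n)) 0) sums (- (\<bar>a\<bar> + 1))"
    using conditionally_convergent_subseries_with_parts[OF assms(1)
        add_nonneg_pos[OF abs_ge_zero zero_less_one] add_nonneg_pos[OF abs_ge_zero zero_less_one]]
    by blast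
  have "summable (\<lambda>n. \<bar>x (k n)\<bar>)"
    using sums_abs_of_parts[OF pos neg] by (rule sums_summable)
  moreover have "{a..b} \<subseteq> {- (\<bar>a\<bar> + 1)..\<bar>b\<bar> + 1}"
    by auto
  ultimately show ?thesis
    using interval_subset_achievement_set[OF tails pos neg] \<open>strict_mono k\<close> by blast
qed

end
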